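(* Let $f:\mathbb{N}\to[0,\infty)$ satisfy $\sum_{n\ge1}f(n)<\infty$, let $(\lambda_n)_{n\in\mathbb{N}}$ be a sequence of positive real numbers, and define $F(x):=\sum_{n\ge1}f(n)e(\lambda_n x)$ for $x\in\mathbb{R}$. Let $\beta\in\left(-\frac{\pi}{2},\frac{\pi}{2}\right)\setminus\{0\}$ and $0<r<1$ be fixed. Let $0<\delta<\cos\beta$ be a fixed real number and put $$\alpha:=\frac{2}{\pi}\arctan\left(\frac{\cos\beta-\delta}{|\sin\beta|}\right).$$ Let $\mathcal{M}\subset\mathbb{N}$ be a finite set with cardinality $|\mathcal{M}|=M$. Then for any real numbers $3<Y<X$ we have $$\max_{x\in[Y,X]}\mathrm{Re}\left(e^{i\beta}F(x)\right)\ge \delta r\sum_{m\in\mathcal{M}}f(m)+O\left(F(0)\left(\frac{1+r}{1-r}\right)^M\left(\frac{Y\log X}{X}\right)^{\alpha}\right),$$ where the implied constant depends only on the fixed parameters $\beta,r,\delta$.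
   Context: Here $e(t):=e^{2\pi i t}$ and $\mathbb{N}=\{1,2,3,\dots\}$. *)

theory Defs
  imports "HOL-Analysis.Analysis"
begin

definition e :: "real \<Rightarrow> complex" where
  "e t = exp (2 * of_real pi * \<i> * of_real t)"

text \<open>F(x) = sum over n >= 1 of f(n) e(lambda_n x); index n ranges over N = {1,2,...},
  realised as Suc k for k :: nat.\<close>
definition Fser :: "(nat \<Rightarrow> real) \<Rightarrow> (nat \<Rightarrow> real) \<Rightarrow> real \<Rightarrow> complex" where
  "Fser f lam x = (\<Sum>k. of_real (f (Suc k)) * e (lam (Suc k) * x))"

end

theory Submission
  imports Defs
begin

(*
  Average Re(e^{i\<beta>} F) over the integers k in [Y, X] against the weights w_k P(k).
  Here w_k = c^a (a)_k / k! (1 - c)^k, with c = ln X / X, is a negative binomial distribution;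
  its characteristic function c^a (1 - (1 - c) e(\<nu>))^(-a) takes values in the sector
  |arg| \<le> a \<pi> / 2, and the choice tan(a \<pi> / 2) = (cos \<beta> - \<delta>) / |sin \<beta>| makes
  Re(e^{i\<beta>} w) \<ge> \<delta> Re w on that sector. P(x) is the product over m in M of the Poisson kernels
  P_r(\<lambda>_m x), with P_r(t) = \<Sum>_k r^|k| e(k t), so the average of e(\<lambda>_n x) is a nonnegative
  combination of values of the truncated characteristic function. Hence every frequency contributes
  at least -\<eta> P(0), where \<eta> \<le> 10 (Y ln X / X)^a is the weight lost by the truncation, while for n
  in M shifting one lattice coordinate produces the extra r \<delta> times the total weight. The total
  weight is at least 1 - \<eta> P(0), so the average, and hence some value, is large.
*)

lemma e_add: "e (s + t) = e s * e t"
  by (simp add: e_def distrib_left distrib_right exp_add)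

lemma norm_e [simp]: "norm (e t) = 1"
  by (simp add: e_def)

lemma e_zero [simp]: "e 0 = 1"
  by (simp add: e_def)

lemma e_mult_of_nat: "e (t * real n) = e t ^ n"
  unfolding e_def by (simp add: exp_of_nat_mult[symmetric] mult_ac)

lemma cnj_e: "cnj (e t) = e (- t)"
  unfolding e_def by (simp add: exp_cnj)

lemma prod_e: "finite A \<Longrightarrow> (\<Prod>i\<in>A. e (t i)) = e (\<Sum>i\<in>A. t i)"
  by (induction A rule: finite_induct) (simp_all add: e_add)

section \<open>Rotating a sector\<close>

lemma cos_add_ge_sector:
  assumes "\<bar>\<psi>\<bar> \<le> \<theta>" "\<theta> < pi / 2" "\<bar>sin \<beta>\<bar> * tan \<theta> \<le> cos \<beta> - \<delta>"
  shows "\<delta> * cos \<psi> \<le> cos (\<beta> + \<psi>)"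
proof -
  have cos_pos: "0 < cos \<psi>"
    using assms by (intro cos_gt_zero_pi) auto
  have "tan \<bar>\<psi>\<bar> \<le> tan \<theta>"
    using assms by (intro tan_mono_le) auto
  moreover have "sin \<bar>\<psi>\<bar> = \<bar>sin \<psi>\<bar>"
    using sin_ge_zero[of "\<bar>\<psi>\<bar>"] assms by (cases "0 \<le> \<psi>") auto
  then have "tan \<bar>\<psi>\<bar> = \<bar>sin \<psi>\<bar> / cos \<psi>"
    by (simp add: tan_def)
  ultimately have "\<bar>sin \<psi>\<bar> \<le> tan \<theta> * cos \<psi>"
    using cos_pos by (simp add: divide_le_eq)
  then have "\<bar>sin \<beta>\<bar> * \<bar>sin \<psi>\<bar> \<le> (\<bar>sin \<beta>\<bar> * tan \<theta>) * cos \<psi>"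
    by (simp add: mult_left_mono mult.assoc)
  also have "\<dots> \<le> (cos \<beta> - \<delta>) * cos \<psi>"
    using assms(3) cos_pos by (intro mult_right_mono) auto
  finally have "sin \<beta> * sin \<psi> \<le> (cos \<beta> - \<delta>) * cos \<psi>"
    by (metis abs_ge_self abs_mult order_trans)
  then show ?thesis
    by (simp add: cos_add algebra_simps)
qed

lemma sector_imp_le_cos:
  assumes "0 \<le> a" "a < 1" "\<bar>sin \<beta>\<bar> * tan (a * pi / 2) \<le> cos \<beta> - \<delta>"
  shows "\<delta> \<le> cos \<beta>"
proof -
  have "0 \<le> \<bar>sin \<beta>\<bar> * tan (a * pi / 2)"
    using assms(1,2) by (simp add: tan_pos_pi2_le)
  then show ?thesis
    using assms(3) by linarith
qed

lemma Re_rotate_powr_sector: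
  fixes w :: complex
  assumes "0 < Re w" "0 \<le> a" "a < 1" "\<bar>sin \<beta>\<bar> * tan (a * pi / 2) \<le> cos \<beta> - \<delta>"
  shows "\<delta> * Re (w powr (- of_real a)) \<le> Re (exp (\<i> * of_real \<beta>) * w powr (- of_real a))"
    and "0 \<le> Re (w powr (- of_real a))"
proof -
  define R where "R = exp (- a * Re (Ln w))"
  define \<psi> where "\<psi> = - a * Im (Ln w)"
  have polar: "w powr (- of_real a) = R * cis \<psi>"
    using assms(1) by (auto simp: powr_def R_def \<psi>_def exp_eq_polar)
  have "\<bar>Im (Ln w)\<bar> < pi / 2"
    using Re_Ln_pos_lt_imp assms(1) by blast
  then have "a * \<bar>Im (Ln w)\<bar> \<le> a * (pi / 2)"
    using assms(2) by (intro mult_left_mono) auto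
  then have \<psi>: "\<bar>\<psi>\<bar> \<le> a * pi / 2"
    using assms(2) by (simp add: \<psi>_def abs_mult)
  moreover have "a * pi \<le> 1 * pi"
    using assms(3) by (intro mult_right_mono) auto
  ultimately have "\<bar>\<psi>\<bar> \<le> pi / 2"
    by linarith
  then have cos_nonneg: "0 \<le> cos \<psi>"
    by (intro cos_ge_zero) (auto simp: abs_le_iff)
  have "a * pi / 2 < pi / 2"
    using assms(3) by simp
  then have sector: "\<delta> * cos \<psi> \<le> cos (\<beta> + \<psi>)"
    by (rule cos_add_ge_sector[OF \<psi> _ assms(4)])
  have rotate: "Re (exp (\<i> * of_real \<beta>) * w powr (- of_real a)) = R * cos (\<beta> + \<psi>)"
    by (simp add: polar exp_eq_polar cos_add algebra_simps)
  have "0 < R"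
    by (simp add: R_def)
  then show "\<delta> * Re (w powr (- of_real a)) \<le> Re (exp (\<i> * of_real \<beta>) * w powr (- of_real a))"
    unfolding rotate using mult_left_mono[OF sector, of R] by (simp add: polar mult.left_commute)
  show "0 \<le> Re (w powr (- of_real a))"
    using cos_nonneg \<open>0 < R\<close> by (simp add: polar)
qed

lemma Re_rotate_near_sector:
  fixes u z w :: complex
  assumes "\<delta> * Re z \<le> Re (u * z)" "0 \<le> Re z" "norm u = 1" "norm (z - w) \<le> \<eta>"
    and "0 \<le> \<delta>" "\<delta> \<le> 1"
  shows "- \<eta> \<le> Re (u * w)" and "\<delta> * Re w - 2 * \<eta> \<le> Re (u * w)" and "- \<eta> \<le> Re w"
proof -
  have "\<bar>Re (u * (z - w))\<bar> \<le> \<eta>"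
    using abs_Re_le_cmod[of "u * (z - w)"] assms(3,4) by (simp add: norm_mult)
  then have rot: "\<bar>Re (u * z) - Re (u * w)\<bar> \<le> \<eta>"
    by (simp add: right_diff_distrib)
  have re: "\<bar>Re z - Re w\<bar> \<le> \<eta>"
    using abs_Re_le_cmod[of "z - w"] assms(4) by simp
  then have "\<delta> * (Re w - Re z) \<le> \<delta> * \<eta>"
    using assms(5) by (intro mult_left_mono) auto
  also have "\<dots> \<le> \<eta>"
    using re assms(5,6) by (intro mult_left_le_one_le) auto
  moreover have "0 \<le> \<delta> * Re z"
    using assms(2,5) by simp
  ultimately show "- \<eta> \<le> Re (u * w)" and "\<delta> * Re w - 2 * \<eta> \<le> Re (u * w)" and "- \<eta> \<le> Re w"
    using rot re assms(1,2) by (auto simp: algebra_simps)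
qed

section \<open>Negative binomial weights\<close>

definition negbin_coeff :: "real \<Rightarrow> nat \<Rightarrow> real" where
  "negbin_coeff a n = pochhammer a n / fact n"

lemma negbin_coeff_pos: "0 < a \<Longrightarrow> 0 < negbin_coeff a n"
  unfolding negbin_coeff_def by (simp add: pochhammer_pos)

lemma negbin_coeff_le_one:
  assumes "0 < a" "a \<le> 1"
  shows "negbin_coeff a n \<le> 1"
proof (induction n)
  case 0
  then show ?case by (simp add: negbin_coeff_def)
next
  case (Suc n)
  have "negbin_coeff a (Suc n) = negbin_coeff a n * ((a + n) / Suc n)"
    by (simp add: negbin_coeff_def pochhammer_Suc field_simps)
  also have "\<dots> \<le> 1 * 1"
    using Suc assms negbin_coeff_pos[of a n] by (intro mult_mono) (auto simp: field_simps)
  finally show ?case by simp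
qed

lemma sums_negbin_coeff:
  fixes z :: complex
  assumes "norm z < 1"
  shows "(\<lambda>n. of_real (negbin_coeff a n) * z ^ n) sums (1 - z) powr (- of_real a)"
proof -
  have "((- of_real a :: complex) gchoose n) * (- z) ^ n = of_real (negbin_coeff a n) * z ^ n" for n
  proof -
    have "((- of_real a :: complex) gchoose n) * (- z) ^ n
            = ((-1) ^ n * (-1) ^ n) * (pochhammer (of_real a) n / fact n) * z ^ n"
      by (simp only: gbinomial_pochhammer minus_minus power_minus[of z]) (simp add: field_simps)
    also have "\<dots> = of_real (negbin_coeff a n) * z ^ n"
      by (simp add: negbin_coeff_def pochhammer_of_real flip: power_mult_distrib)
    finally show ?thesis .
  qed
  with gen_binomial_complex[of "- z" "- of_real a"] assms show ?thesis
    by simp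
qed

lemma sums_negbin_coeff_real:
  fixes x :: real
  assumes "0 \<le> x" "x < 1"
  shows "(\<lambda>n. negbin_coeff a n * x ^ n) sums (1 - x) powr (- a)"
proof -
  have "(\<lambda>n. of_real (negbin_coeff a n * x ^ n) :: complex) sums of_real (1 - x) powr (- of_real a)"
    using sums_negbin_coeff[of "of_real x" a] assms by simp
  also have "of_real (1 - x) powr (- of_real a) = (of_real ((1 - x) powr (- a)) :: complex)"
    using assms by (simp flip: powr_of_real)
  finally show ?thesis
    by (simp only: sums_of_real_iff)
qed

definition negbin_weight :: "real \<Rightarrow> real \<Rightarrow> nat \<Rightarrow> real" where
  "negbin_weight a c n = c powr a * negbin_coeff a n * (1 - c) ^ n"

definition negbin_char :: "real \<Rightarrow> real \<Rightarrow> real \<Rightarrow> complex" where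
  "negbin_char a c \<nu> = of_real (c powr a) * (1 - of_real (1 - c) * e \<nu>) powr (- of_real a)"

lemma negbin_weight_nonneg: "0 < a \<Longrightarrow> c < 1 \<Longrightarrow> 0 \<le> negbin_weight a c n"
  unfolding negbin_weight_def using negbin_coeff_pos[of a n] by simp

lemma sums_negbin_weight:
  assumes "0 < c" "c < 1"
  shows "negbin_weight a c sums 1"
proof -
  have "(\<lambda>n. negbin_coeff a n * (1 - c) ^ n) sums c powr (- a)"
    using sums_negbin_coeff_real[of "1 - c" a] assms by simp
  from sums_mult[OF this, of "c powr a"] have "(\<lambda>n. c powr a * negbin_coeff a n * (1 - c) ^ n) sums 1"
    using assms by (simp add: powr_minus mult.assoc)
  then show ?thesis
    by (simp add: negbin_weight_def[abs_def])
qed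

lemma sums_negbin_char:
  assumes "0 < c" "c < 1"
  shows "(\<lambda>n. of_real (negbin_weight a c n) * e (\<nu> * real n)) sums negbin_char a c \<nu>"
proof -
  have "norm (of_real (1 - c) * e \<nu>) = \<bar>1 - c\<bar>"
    by (simp only: norm_mult norm_of_real norm_e mult_1_right)
  then have "norm (of_real (1 - c) * e \<nu>) < 1"
    using assms by simp
  from sums_mult[OF sums_negbin_coeff[OF this, of a], of "of_real (c powr a)"]
  show ?thesis
    by (simp add: negbin_weight_def negbin_char_def e_mult_of_nat power_mult_distrib mult_ac)
qed

lemma negbin_char_sector:
  assumes "0 < c" "c < 1" "0 \<le> a" "a < 1" "\<bar>sin \<beta>\<bar> * tan (a * pi / 2) \<le> cos \<beta> - \<delta>"
  shows "\<delta> * Re (negbin_char a c \<nu>) \<le> Re (exp (\<i> * of_real \<beta>) * negbin_char a c \<nu>)"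
    and "0 \<le> Re (negbin_char a c \<nu>)"
proof -
  define w where "w = 1 - of_real (1 - c) * e \<nu>"
  have "norm (of_real (1 - c) * e \<nu>) = \<bar>1 - c\<bar>"
    by (simp only: norm_mult norm_of_real norm_e mult_1_right)
  then have "Re (of_real (1 - c) * e \<nu>) \<le> 1 - c"
    using complex_Re_le_cmod[of "of_real (1 - c) * e \<nu>"] assms by simp
  moreover have "Re w = 1 - Re (of_real (1 - c) * e \<nu>)"
    by (simp only: w_def minus_complex.sel one_complex.sel)
  ultimately have "0 < Re w"
    using assms by linarith
  note sector = Re_rotate_powr_sector[OF this assms(3-5)]
  have char: "negbin_char a c \<nu> = of_real (c powr a) * w powr (- of_real a)"
    by (simp add: negbin_char_def w_def)
  show "\<delta> * Re (negbin_char a c \<nu>) \<le> Re (exp (\<i> * of_real \<beta>) * negbin_char a c \<nu>)"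
    using mult_left_mono[OF sector(1), of "c powr a"]
    by (simp add: char mult.left_commute[of _ "of_real (c powr a)"] mult.left_commute[of \<delta>])
  show "0 \<le> Re (negbin_char a c \<nu>)"
    using sector(2) by (simp add: char)
qed

section \<open>Truncation to the integers in \<open>[Y, X]\<close>\<close>

definition nats_between :: "real \<Rightarrow> real \<Rightarrow> nat set" where
  "nats_between Y X = {k. Y \<le> real k \<and> real k \<le> X}"

lemma finite_nats_between [simp]: "finite (nats_between Y X)"
proof (rule finite_subset)
  show "nats_between Y X \<subseteq> {..nat \<lceil>X\<rceil>}"
  proof
    fix k
    assume "k \<in> nats_between Y X"
    then have "real k \<le> X"
      by (simp add: nats_between_def)
    then have "real k \<le> of_int \<lceil>X\<rceil>"
      using le_of_int_ceiling[of X] by linarith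
    then have "int k \<le> \<lceil>X\<rceil>"
      by linarith
    then show "k \<in> {..nat \<lceil>X\<rceil>}"
      by simp
  qed
qed simp

definition trunc_char :: "real \<Rightarrow> real \<Rightarrow> real \<Rightarrow> real \<Rightarrow> real \<Rightarrow> complex" where
  "trunc_char a c Y X \<nu> = (\<Sum>k\<in>nats_between Y X. of_real (negbin_weight a c k) * e (\<nu> * real k))"

definition trunc_defect :: "real \<Rightarrow> real \<Rightarrow> real \<Rightarrow> real \<Rightarrow> real" where
  "trunc_defect a c Y X = 1 - (\<Sum>k\<in>nats_between Y X. negbin_weight a c k)"

lemma Re_trunc_char_zero: "Re (trunc_char a c Y X 0) = 1 - trunc_defect a c Y X"
  by (simp add: trunc_char_def trunc_defect_def)

lemma sums_trunc_defect:
  assumes "0 < c" "c < 1"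
  shows "(\<lambda>n. if n \<in> nats_between Y X then 0 else negbin_weight a c n) sums trunc_defect a c Y X"
proof -
  have "(\<lambda>n. negbin_weight a c n - (if n \<in> nats_between Y X then negbin_weight a c n else 0))
          sums trunc_defect a c Y X"
    unfolding trunc_defect_def
    by (intro sums_diff sums_negbin_weight sums_If_finite_set assms finite_nats_between)
  moreover have "(\<lambda>n. negbin_weight a c n - (if n \<in> nats_between Y X then negbin_weight a c n else 0))
      = (\<lambda>n. if n \<in> nats_between Y X then 0 else negbin_weight a c n)"
    by (rule ext) simp
  ultimately show ?thesis
    by simp
qed

lemma trunc_defect_nonneg:
  assumes "0 < a" "0 < c" "c < 1"
  shows "0 \<le> trunc_defect a c Y X"
  by (rule sums_le[OF _ sums_zero sums_trunc_defect[OF assms(2,3)]])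
    (simp add: negbin_weight_nonneg[OF assms(1,3)])

lemma norm_negbin_char_minus_trunc_char:
  assumes "0 < a" "0 < c" "c < 1"
  shows "norm (negbin_char a c \<nu> - trunc_char a c Y X \<nu>) \<le> trunc_defect a c Y X"
proof -
  define S where "S = nats_between Y X"
  define t where "t n = of_real (negbin_weight a c n) * e (\<nu> * real n)" for n
  have tail: "(\<lambda>n. if n \<in> S then 0 else t n) sums (negbin_char a c \<nu> - trunc_char a c Y X \<nu>)"
    using sums_diff[OF sums_negbin_char[OF assms(2,3), of a \<nu>] sums_If_finite_set[of S t]]
    by (simp add: S_def t_def trunc_char_def if_distrib cong: if_cong)
  have norm_tail: "norm (if n \<in> S then 0 else t n) = (if n \<in> S then 0 else negbin_weight a c n)" for n
    using negbin_weight_nonneg[OF assms(1,3), of n] by (simp add: t_def norm_mult)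
  note defect = sums_trunc_defect[OF assms(2,3), where Y = Y and X = X and a = a]
  have "summable (\<lambda>n. norm (if n \<in> S then 0 else t n))"
    unfolding norm_tail using defect by (simp add: S_def sums_iff)
  from summable_norm[OF this] show ?thesis
    using tail defect unfolding norm_tail by (simp add: S_def sums_iff)
qed

lemma negbin_weight_le_rankin:
  assumes "0 < a" "0 \<le> c" "c < 1" "0 < \<rho>" "\<rho> \<le> 1" "real n \<le> Y"
  shows "negbin_weight a c n \<le> c powr a * negbin_coeff a n * \<rho> ^ n / \<rho> powr Y"
proof -
  have "\<rho> powr Y \<le> \<rho> ^ n"
    using assms(4-6) powr_mono'[of "real n" Y \<rho>] by (simp add: powr_realpow)
  then have "1 \<le> \<rho> ^ n / \<rho> powr Y"
    using assms(4) by simp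
  moreover have "(1 - c) ^ n \<le> 1"
    using assms(2,3) by (simp add: power_le_one)
  ultimately have "(1 - c) ^ n \<le> \<rho> ^ n / \<rho> powr Y"
    by linarith
  then have "c powr a * negbin_coeff a n * (1 - c) ^ n \<le> c powr a * negbin_coeff a n * (\<rho> ^ n / \<rho> powr Y)"
    using negbin_coeff_pos[OF assms(1), of n] by (intro mult_left_mono) auto
  then show ?thesis
    by (simp add: negbin_weight_def)
qed

lemma negbin_weight_le_geometric:
  assumes "0 < a" "a \<le> 1" "c < 1"
  shows "negbin_weight a c n \<le> c powr a * (1 - c) ^ n"
proof -
  have "c powr a * (1 - c) ^ n * negbin_coeff a n \<le> c powr a * (1 - c) ^ n"
    using negbin_coeff_le_one[OF assms(1,2), of n] assms(3) by (intro mult_left_le) auto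
  then show ?thesis
    by (simp add: negbin_weight_def mult_ac)
qed

lemma negbin_weight_outside_le:
  assumes "0 < a" "a \<le> 1" "0 < c" "c < 1" "0 < \<rho>" "\<rho> \<le> 1" "0 \<le> X" "n \<notin> nats_between Y X"
  shows "negbin_weight a c n
           \<le> c powr a * negbin_coeff a n * \<rho> ^ n / \<rho> powr Y
             + c powr a * (if Suc (nat \<lfloor>X\<rfloor>) \<le> n then (1 - c) ^ n else 0)"
proof -
  have low_nonneg: "0 \<le> c powr a * negbin_coeff a n * \<rho> ^ n / \<rho> powr Y"
    using negbin_coeff_pos[OF assms(1), of n] assms(5) by simp
  have high_nonneg: "0 \<le> c powr a * (if Suc (nat \<lfloor>X\<rfloor>) \<le> n then (1 - c) ^ n else 0)"
    using assms(4) by simp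
  consider "real n < Y" | "X < real n"
    using assms(8) by (force simp: nats_between_def)
  then show ?thesis
  proof cases
    case 1
    then have "negbin_weight a c n \<le> c powr a * negbin_coeff a n * \<rho> ^ n / \<rho> powr Y"
      using assms(1,3-6) by (intro negbin_weight_le_rankin) auto
    then show ?thesis
      using high_nonneg by linarith
  next
    case 2
    then have "\<lfloor>X\<rfloor> < int n"
      by (simp add: floor_less_iff)
    then have "Suc (nat \<lfloor>X\<rfloor>) \<le> n"
      using assms(7) by (simp add: nat_less_iff Suc_le_eq)
    then show ?thesis
      using negbin_weight_le_geometric[OF assms(1,2,4), of n] low_nonneg by simp
  qed
qed

lemma sums_geometric_tail:
  fixes q :: "'a::real_normed_field"
  assumes "norm q < 1"
  shows "(\<lambda>n. if N \<le> n then q ^ n else 0) sums (q ^ N / (1 - q))"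
proof -
  have "(\<lambda>n. q ^ N * q ^ n) sums (q ^ N * (1 / (1 - q)))"
    using geometric_sums[OF assms] by (rule sums_mult)
  then have "(\<lambda>n. (if N \<le> n + N then q ^ (n + N) else 0)) sums (q ^ N / (1 - q))"
    by (simp add: power_add mult.commute)
  then show ?thesis
    by (subst (asm) sums_zero_iff_shift) auto
qed

lemma trunc_defect_le:
  assumes "0 < a" "a \<le> 1" "0 < c" "c < 1" "0 < \<rho>" "\<rho> < 1" "0 \<le> X"
  shows "trunc_defect a c Y X \<le> c powr a * ((1 - \<rho>) powr (- a) / \<rho> powr Y + (1 - c) powr X / c)"
proof -
  define N where "N = Suc (nat \<lfloor>X\<rfloor>)"
  have "(\<lambda>n. c powr a * (negbin_coeff a n * \<rho> ^ n) / \<rho> powr Y)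
      sums (c powr a * (1 - \<rho>) powr (- a) / \<rho> powr Y)"
    using assms(5,6) by (intro sums_divide sums_mult sums_negbin_coeff_real) auto
  moreover have "(\<lambda>n. if N \<le> n then (1 - c) ^ n else 0) sums ((1 - c) ^ N / c)"
    using sums_geometric_tail[of "1 - c" N] assms(3,4) by simp
  then have "(\<lambda>n. c powr a * (if N \<le> n then (1 - c) ^ n else 0)) sums (c powr a * ((1 - c) ^ N / c))"
    by (rule sums_mult)
  ultimately have "(\<lambda>n. c powr a * negbin_coeff a n * \<rho> ^ n / \<rho> powr Y
             + c powr a * (if N \<le> n then (1 - c) ^ n else 0))
          sums (c powr a * (1 - \<rho>) powr (- a) / \<rho> powr Y + c powr a * ((1 - c) ^ N / c))"
    by (simp add: sums_add mult.assoc)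
  moreover have "(if n \<in> nats_between Y X then 0 else negbin_weight a c n)
      \<le> c powr a * negbin_coeff a n * \<rho> ^ n / \<rho> powr Y
         + c powr a * (if N \<le> n then (1 - c) ^ n else 0)" for n
    using negbin_weight_outside_le[OF assms(1-5) less_imp_le[OF assms(6)] assms(7)]
      negbin_coeff_pos[OF assms(1), of n] assms(4,5)
    by (auto simp: N_def)
  ultimately have "trunc_defect a c Y X
      \<le> c powr a * (1 - \<rho>) powr (- a) / \<rho> powr Y + c powr a * ((1 - c) ^ N / c)"
    by (rule sums_le[OF _ sums_trunc_defect[OF assms(3,4)], rotated])
  also have "(1 - c) ^ N \<le> (1 - c) powr X"
  proof -
    have "X \<le> real N"
      using assms(7) real_of_int_floor_add_one_ge[of X] by (simp add: N_def add.commute)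
    then show ?thesis
      using assms(3,4) powr_mono'[of X "real N" "1 - c"] by (simp add: powr_realpow)
  qed
  finally show ?thesis
    using assms(3) by (simp add: distrib_left divide_right_mono mult_left_mono)
qed

lemma ln_ge_one: "3 \<le> X \<Longrightarrow> 1 \<le> ln (X :: real)"
  using exp_le by (subst ln_ge_iff) auto

lemma inverse_powr_one_minus_inverse_le:
  fixes Y :: real
  assumes "2 \<le> Y"
  shows "1 / (1 - 1 / Y) powr Y \<le> 9"
proof -
  have "- (1 / Y) - 2 * (1 / Y)\<^sup>2 \<le> ln (1 - 1 / Y)"
    using assms by (intro ln_one_minus_pos_lower_bound) auto
  moreover have "2 * (1 / Y)\<^sup>2 \<le> 1 / Y"
    using assms by (simp add: power2_eq_square field_simps)
  ultimately have "- 2 / Y \<le> ln (1 - 1 / Y)"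
    by simp
  then have "- 2 \<le> Y * ln (1 - 1 / Y)"
    using assms by (simp add: field_simps)
  then have "exp (- 2) \<le> (1 - 1 / Y) powr Y"
    using assms by (simp add: powr_def)
  then have "1 / (1 - 1 / Y) powr Y \<le> exp 2"
    using assms by (simp add: exp_minus field_simps)
  also have "exp (2 :: real) = exp 1 * exp 1"
    by (simp flip: exp_add)
  also have "\<dots> \<le> 3 * 3"
    using exp_le by (intro mult_mono) auto
  finally show ?thesis
    by simp
qed

lemma one_minus_ln_div_powr_le:
  fixes X :: real
  assumes "0 < X"
  shows "(1 - ln X / X) powr X \<le> 1 / X"
proof -
  have "0 < 1 - ln X / X"
    using assms by simp
  then have "X * ln (1 - ln X / X) \<le> X * (- (ln X / X))"
    using ln_le_minus_one[of "1 - ln X / X"] assms by (intro mult_left_mono) auto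
  then have "(1 - ln X / X) powr X \<le> exp (- ln X)"
    using assms \<open>0 < 1 - ln X / X\<close> by (simp add: powr_def mult.commute)
  also have "exp (- ln X) = 1 / X"
    using assms by (simp add: exp_minus divide_inverse)
  finally show ?thesis .
qed

lemma trunc_defect_le_log:
  assumes "0 < a" "a \<le> 1" "3 < Y" "Y < X"
  shows "trunc_defect a (ln X / X) Y X \<le> 10 * (Y * ln X / X) powr a"
proof -
  define c where "c = ln X / X"
  define \<epsilon> where "\<epsilon> = (Y * ln X / X) powr a"
  have log: "1 \<le> ln X"
    using assms by (intro ln_ge_one) auto
  then have c: "0 < c" "c < 1"
    using assms by (auto simp: c_def)
  have "c powr a * Y powr a = (c * Y) powr a"
    using assms c by (simp add: powr_mult)
  then have \<epsilon>: "c powr a * Y powr a = \<epsilon>" "0 \<le> \<epsilon>"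
    by (simp_all add: \<epsilon>_def c_def mult.commute)
  have "trunc_defect a c Y X
          \<le> c powr a * ((1 - (1 - 1 / Y)) powr (- a) / (1 - 1 / Y) powr Y + (1 - c) powr X / c)"
    using assms c by (intro trunc_defect_le) auto
  also have "\<dots> = \<epsilon> * (1 / (1 - 1 / Y) powr Y) + c powr a * (1 - c) powr X / c"
    using assms \<epsilon>(1) by (simp add: powr_minus_divide powr_divide distrib_left)
  also have "\<epsilon> * (1 / (1 - 1 / Y) powr Y) \<le> \<epsilon> * 9"
    using assms \<epsilon>(2) by (intro mult_left_mono inverse_powr_one_minus_inverse_le) auto
  also have "c powr a * (1 - c) powr X / c \<le> c powr a * (1 / X) / c"
    using c assms one_minus_ln_div_powr_le[of X]
    by (intro divide_right_mono mult_left_mono) (auto simp: c_def)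
  also have "\<dots> = c powr a / ln X"
    using assms by (simp add: c_def)
  also have "\<dots> \<le> c powr a * Y powr a"
  proof -
    have "1 * 1 \<le> Y powr a * ln X"
      using log assms by (intro mult_mono ge_one_powr_ge_zero) auto
    then show ?thesis
      using log c by (simp add: divide_le_eq)
  qed
  finally show ?thesis
    using \<epsilon>(1) by (simp add: c_def \<epsilon>_def)
qed

lemma trunc_char_near_sector:
  assumes "0 < c" "c < 1" "0 < a" "a < 1" "0 \<le> \<delta>"
    and "\<bar>sin \<beta>\<bar> * tan (a * pi / 2) \<le> cos \<beta> - \<delta>"
  shows "- trunc_defect a c Y X \<le> Re (exp (\<i> * of_real \<beta>) * trunc_char a c Y X \<nu>)"
    and "\<delta> * Re (trunc_char a c Y X \<nu>) - 2 * trunc_defect a c Y X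
           \<le> Re (exp (\<i> * of_real \<beta>) * trunc_char a c Y X \<nu>)"
    and "- trunc_defect a c Y X \<le> Re (trunc_char a c Y X \<nu>)"
  using Re_rotate_near_sector[OF negbin_char_sector[OF assms(1,2) less_imp_le[OF assms(3)] assms(4,6)]
      norm_exp_i_times norm_negbin_char_minus_trunc_char[OF assms(3,1,2)] assms(5)
      order_trans[OF sector_imp_le_cos[OF less_imp_le[OF assms(3)] assms(4,6)] cos_le_one]]
  by simp_all

section \<open>Poisson kernels\<close>

definition poisson_kernel :: "real \<Rightarrow> real \<Rightarrow> real" where
  "poisson_kernel r t = (1 - r\<^sup>2) / (norm (1 - of_real r * e t))\<^sup>2"

lemma poisson_kernel_pos:
  assumes "0 \<le> r" "r < 1"
  shows "0 < poisson_kernel r t"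
proof -
  have "norm (of_real r * e t) \<noteq> norm (1 :: complex)"
    using assms by (simp add: norm_mult)
  then have "1 - of_real r * e t \<noteq> 0"
    by force
  moreover have "r\<^sup>2 < 1"
    using assms by (simp add: power_less_one_iff abs_square_less_1)
  ultimately show ?thesis
    by (simp add: poisson_kernel_def)
qed

lemma poisson_kernel_zero:
  assumes "0 \<le> r" "r < 1"
  shows "poisson_kernel r 0 = (1 + r) / (1 - r)"
proof -
  have "norm (1 - of_real r :: complex) = 1 - r"
    using assms by (metis abs_of_nonneg diff_ge_0_iff_ge less_imp_le norm_of_real of_real_1 of_real_diff)
  moreover have "1 - r\<^sup>2 = (1 + r) * (1 - r)"
    by (simp add: power2_eq_square algebra_simps)
  ultimately show ?thesis
    using assms by (simp add: poisson_kernel_def power2_eq_square)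
qed

lemma has_sum_geometric:
  fixes z :: "'a :: {real_normed_field, banach}"
  assumes "norm z < 1"
  shows "((\<lambda>n. z ^ n) has_sum (1 / (1 - z))) UNIV"
  using assms geometric_sums[of z] summable_geometric[of "norm z"]
  by (intro norm_summable_imp_has_sum) (auto simp: norm_power)

lemma range_int_Un_neg_int: "range int \<union> (\<lambda>n. - int n) ` {1..} = UNIV"
proof -
  have "k \<in> range int \<union> (\<lambda>n. - int n) ` {1..}" for k :: int
  proof (cases "0 \<le> k")
    case True
    then show ?thesis
      by (metis UnI1 nonneg_eq_int rangeI)
  next
    case False
    then have "k = - int (nat (- k))" "nat (- k) \<in> {1..}"
      by auto
    then show ?thesis
      by blast
  qed
  then show ?thesis
    by blast
qed

lemma geometric_two_sided_eq:
  fixes z :: complex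
  assumes "norm z < 1"
  shows "1 / (1 - z) + cnj z / (1 - cnj z) = of_real ((1 - (norm z)\<^sup>2) / (norm (1 - z))\<^sup>2)"
proof -
  have "z \<noteq> 1"
    using assms by auto
  then have "1 - z \<noteq> 0" "1 - cnj z \<noteq> 0"
    by simp_all
  then have "1 / (1 - z) + cnj z / (1 - cnj z) = (1 - z * cnj z) / ((1 - z) * cnj (1 - z))"
    by (simp add: field_simps)
  also have "\<dots> = of_real ((1 - (norm z)\<^sup>2) / (norm (1 - z))\<^sup>2)"
    by (simp only: complex_norm_square[symmetric]) simp
  finally show ?thesis .
qed

lemma has_sum_poisson_kernel:
  assumes "0 \<le> r" "r < 1"
  shows "((\<lambda>k::int. of_real (r ^ nat \<bar>k\<bar>) * e (of_int k * t)) has_sum of_real (poisson_kernel r t)) UNIV"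
proof -
  define f where "f k = of_real (r ^ nat \<bar>k\<bar>) * e (of_int k * t)" for k :: int
  define z where "z = of_real r * e t"
  have norm_z: "norm z = r" and norm_cnj_z: "norm (cnj z) = r"
    using assms by (simp_all add: z_def norm_mult)
  have "(f has_sum (1 / (1 - z))) (range int)"
  proof -
    have "f (int n) = z ^ n" for n
      by (simp add: f_def z_def power_mult_distrib e_mult_of_nat[symmetric] mult.commute)
    then show ?thesis
      using has_sum_geometric[of z] assms norm_z by (subst has_sum_reindex) (auto simp: o_def)
  qed
  moreover have "(f has_sum (cnj z / (1 - cnj z))) ((\<lambda>n. - int n) ` {1..})"
  proof -
    have "f (- int n) = cnj z ^ n" for n
      by (simp add: f_def z_def cnj_e power_mult_distrib e_mult_of_nat[symmetric] mult.commute)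
    then show ?thesis
      using has_sum_geometric_from_1[of "cnj z"] assms norm_cnj_z
      by (subst has_sum_reindex) (auto simp: o_def inj_on_def)
  qed
  moreover have "range int \<inter> (\<lambda>n. - int n) ` {1..} = {}"
    by auto
  ultimately have "(f has_sum (1 / (1 - z) + cnj z / (1 - cnj z))) UNIV"
    using has_sum_Un_disjoint range_int_Un_neg_int by metis
  also have "1 / (1 - z) + cnj z / (1 - cnj z) = of_real ((1 - (norm z)\<^sup>2) / (norm (1 - z))\<^sup>2)"
    using assms norm_z by (intro geometric_two_sided_eq) simp
  also have "(1 - (norm z)\<^sup>2) / (norm (1 - z))\<^sup>2 = poisson_kernel r t"
    by (simp only: norm_z) (simp add: poisson_kernel_def z_def)
  finally show ?thesis
    unfolding f_def .
qed

lemma has_sum_power_abs: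
  fixes r :: real
  assumes "0 \<le> r" "r < 1"
  shows "((\<lambda>k::int. r ^ nat \<bar>k\<bar>) has_sum ((1 + r) / (1 - r))) UNIV"
proof -
  have "((\<lambda>k::int. of_real (r ^ nat \<bar>k\<bar>) :: complex) has_sum of_real (poisson_kernel r 0)) UNIV"
    using has_sum_poisson_kernel[OF assms, of 0] by (simp only: mult_zero_right e_zero mult_1_right)
  then show ?thesis
    by (simp only: has_sum_of_real_iff poisson_kernel_zero[OF assms])
qed

definition poisson_prod :: "real \<Rightarrow> ('i \<Rightarrow> real) \<Rightarrow> 'i set \<Rightarrow> real \<Rightarrow> real" where
  "poisson_prod r lam M x = (\<Prod>i\<in>M. poisson_kernel r (lam i * x))"

definition lattice_weight :: "real \<Rightarrow> 'i set \<Rightarrow> ('i \<Rightarrow> int) \<Rightarrow> real" where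
  "lattice_weight r M j = (\<Prod>i\<in>M. r ^ nat \<bar>j i\<bar>)"

definition lattice_freq :: "('i \<Rightarrow> real) \<Rightarrow> 'i set \<Rightarrow> ('i \<Rightarrow> int) \<Rightarrow> real" where
  "lattice_freq lam M j = (\<Sum>i\<in>M. of_int (j i) * lam i)"

lemma poisson_prod_pos: "0 \<le> r \<Longrightarrow> r < 1 \<Longrightarrow> 0 < poisson_prod r lam M x"
  unfolding poisson_prod_def by (intro prod_pos poisson_kernel_pos) auto

lemma lattice_weight_nonneg: "0 \<le> r \<Longrightarrow> 0 \<le> lattice_weight r M j"
  unfolding lattice_weight_def by (intro prod_nonneg) auto

lemma has_sum_poisson_prod:
  assumes "0 \<le> r" "r < 1" "finite M"
  shows "((\<lambda>j. of_real (lattice_weight r M j) * e (lattice_freq lam M j * x))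
           has_sum of_real (poisson_prod r lam M x)) (M \<rightarrow>\<^sub>E UNIV)"
proof -
  define f where "f i k = of_real (r ^ nat \<bar>k\<bar>) * e (of_int k * (lam i * x))" for i and k :: int
  have "(\<lambda>k. norm (f i k)) summable_on UNIV" for i
    using has_sum_imp_summable[OF has_sum_power_abs[OF assms(1,2)]] assms(1)
    by (simp add: f_def norm_mult norm_power)
  then have "infsum (\<lambda>j. \<Prod>i\<in>M. f i (j i)) (M \<rightarrow>\<^sub>E UNIV) = (\<Prod>i\<in>M. infsum (f i) UNIV)"
    by (intro infsum_prod_PiE_abs assms(3))
  also have "\<dots> = of_real (poisson_prod r lam M x)"
  proof -
    have "infsum (f i) UNIV = of_real (poisson_kernel r (lam i * x))" for i
      unfolding f_def by (rule infsumI[OF has_sum_poisson_kernel[OF assms(1,2)]])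
    then show ?thesis
      by (simp add: poisson_prod_def)
  qed
  finally have sum: "infsum (\<lambda>j. \<Prod>i\<in>M. f i (j i)) (M \<rightarrow>\<^sub>E UNIV) = of_real (poisson_prod r lam M x)" .
  \<comment> \<open>summability comes for free: a family that is not summable has infinite sum 0\<close>
  have "(\<lambda>j. \<Prod>i\<in>M. f i (j i)) summable_on (M \<rightarrow>\<^sub>E UNIV)"
  proof (rule ccontr)
    assume "\<not> ?thesis"
    then have "infsum (\<lambda>j. \<Prod>i\<in>M. f i (j i)) (M \<rightarrow>\<^sub>E UNIV) = 0"
      by (rule infsum_not_exists)
    with sum poisson_prod_pos[OF assms(1,2)] show False
      by (metis of_real_eq_0_iff less_irrefl)
  qed
  with sum have "((\<lambda>j. \<Prod>i\<in>M. f i (j i)) has_sum of_real (poisson_prod r lam M x)) (M \<rightarrow>\<^sub>E UNIV)"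
    by (simp add: has_sum_iff)
  moreover have "(\<Prod>i\<in>M. f i (j i)) = of_real (lattice_weight r M j) * e (lattice_freq lam M j * x)" for j
    using assms(3)
    by (simp add: f_def prod.distrib prod_e lattice_weight_def lattice_freq_def sum_distrib_left mult_ac)
  ultimately show ?thesis
    by simp
qed

lemma has_sum_lattice_weight:
  assumes "0 \<le> r" "r < 1" "finite M"
  shows "(lattice_weight r M has_sum ((1 + r) / (1 - r)) ^ card M) (M \<rightarrow>\<^sub>E UNIV)"
proof -
  have "((\<lambda>j. of_real (lattice_weight r M j) :: complex) has_sum of_real (poisson_prod r (\<lambda>_. 0) M 0))
          (M \<rightarrow>\<^sub>E UNIV)"
    using has_sum_poisson_prod[OF assms, of "\<lambda>_. 0" 0] by (simp add: lattice_freq_def)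
  moreover have "poisson_prod r (\<lambda>_. 0) M 0 = ((1 + r) / (1 - r)) ^ card M"
    using poisson_kernel_zero[OF assms(1,2)] by (simp add: poisson_prod_def)
  ultimately show ?thesis
    by (simp only: has_sum_of_real_iff)
qed

lemma bij_betw_decr_coordinate:
  assumes "m \<in> M"
  shows "bij_betw (\<lambda>j. j(m := j m - 1)) (M \<rightarrow>\<^sub>E (UNIV :: int set)) (M \<rightarrow>\<^sub>E UNIV)"
  by (rule bij_betw_byWitness[where f' = "\<lambda>j. j(m := j m + 1)"])
    (use assms in \<open>auto simp: PiE_def extensional_def\<close>)

lemma lattice_freq_decr_coordinate:
  assumes "m \<in> M" "finite M"
  shows "lattice_freq lam M (j(m := j m - 1)) = lattice_freq lam M j - lam m"
proof -
  have "(\<Sum>i\<in>M - {m}. of_int ((j(m := j m - 1)) i) * lam i) = (\<Sum>i\<in>M - {m}. of_int (j i) * lam i)"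
    by (intro sum.cong) auto
  then show ?thesis
    using assms by (simp add: lattice_freq_def sum.remove algebra_simps)
qed

lemma lattice_weight_decr_coordinate:
  assumes "m \<in> M" "finite M" "0 \<le> r" "r \<le> 1"
  shows "r * lattice_weight r M j \<le> lattice_weight r M (j(m := j m - 1))"
proof -
  define R where "R = (\<Prod>i\<in>M - {m}. r ^ nat \<bar>j i\<bar>)"
  have "(\<Prod>i\<in>M - {m}. r ^ nat \<bar>(j(m := j m - 1)) i\<bar>) = R"
    unfolding R_def by (intro prod.cong) auto
  then have decr: "lattice_weight r M (j(m := j m - 1)) = r ^ nat \<bar>j m - 1\<bar> * R"
    using assms(1,2) by (simp add: lattice_weight_def prod.remove)
  have "lattice_weight r M j = r ^ nat \<bar>j m\<bar> * R"
    using assms(1,2) by (simp add: lattice_weight_def R_def prod.remove)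
  moreover have "r * r ^ nat \<bar>j m\<bar> \<le> r ^ nat \<bar>j m - 1\<bar>"
    using assms(3,4) power_decreasing[of "nat \<bar>j m - 1\<bar>" "Suc (nat \<bar>j m\<bar>)" r] by simp
  moreover have "0 \<le> R"
    using assms(3) by (simp add: R_def prod_nonneg)
  ultimately show ?thesis
    by (simp add: decr mult_right_mono mult.assoc[symmetric])
qed

section \<open>Smoothing by a product of Poisson kernels\<close>

lemma has_sum_sum:
  fixes f :: "'i \<Rightarrow> 'a \<Rightarrow> 'b::topological_comm_monoid_add"
  assumes "finite I" "\<And>i. i \<in> I \<Longrightarrow> (f i has_sum s i) A"
  shows "((\<lambda>x. \<Sum>i\<in>I. f i x) has_sum (\<Sum>i\<in>I. s i)) A"
  using assms by (induction I rule: finite_induct) (auto intro: has_sum_add)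

lemma has_sum_diff:
  fixes f g :: "'a \<Rightarrow> 'b::topological_ab_group_add"
  assumes "(f has_sum s) A" "(g has_sum t) A"
  shows "((\<lambda>x. f x - g x) has_sum (s - t)) A"
proof -
  have "((\<lambda>x. - g x) has_sum - t) A"
    using assms(2) by (simp add: has_sum_uminus)
  from has_sum_add[OF assms(1) this] show ?thesis
    by simp
qed

definition smoothed_char ::
    "real \<Rightarrow> ('i \<Rightarrow> real) \<Rightarrow> 'i set \<Rightarrow> real \<Rightarrow> real \<Rightarrow> real \<Rightarrow> real \<Rightarrow> real \<Rightarrow> complex" where
  "smoothed_char r lam M a c Y X \<nu> =
     (\<Sum>k\<in>nats_between Y X. of_real (negbin_weight a c k * poisson_prod r lam M (real k)) * e (\<nu> * real k))"

definition smoothed_mass :: "real \<Rightarrow> ('i \<Rightarrow> real) \<Rightarrow> 'i set \<Rightarrow> real \<Rightarrow> real \<Rightarrow> real \<Rightarrow> real \<Rightarrow> real" where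
  "smoothed_mass r lam M a c Y X =
     (\<Sum>k\<in>nats_between Y X. negbin_weight a c k * poisson_prod r lam M (real k))"

lemma Re_smoothed_char_zero: "Re (smoothed_char r lam M a c Y X 0) = smoothed_mass r lam M a c Y X"
  by (simp add: smoothed_char_def smoothed_mass_def)

locale sector_smoothing =
  fixes \<beta> \<delta> r a c Y X :: real and lam :: "'i \<Rightarrow> real" and M :: "'i set"
  assumes r: "0 \<le> r" "r < 1" and \<delta>: "0 \<le> \<delta>"
    and a: "0 < a" "a < 1" and sector: "\<bar>sin \<beta>\<bar> * tan (a * pi / 2) \<le> cos \<beta> - \<delta>"
    and c: "0 < c" "c < 1" and M: "finite M"
begin

abbreviation "W \<equiv> trunc_char a c Y X"
abbreviation "V \<equiv> smoothed_char r lam M a c Y X"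
abbreviation "\<Lambda> \<equiv> smoothed_mass r lam M a c Y X"
abbreviation "\<eta> \<equiv> trunc_defect a c Y X"
abbreviation "K \<equiv> ((1 + r) / (1 - r)) ^ card M"

lemmas W_near_sector = trunc_char_near_sector[OF c a \<delta> sector, where Y = Y and X = X]

lemma eta_nonneg: "0 \<le> \<eta>"
  using trunc_defect_nonneg a c by simp

lemma delta_le_one: "\<delta> \<le> 1"
  using sector_imp_le_cos[OF less_imp_le[OF a(1)] a(2) sector] cos_le_one[of \<beta>] by linarith

lemma has_sum_Re_smoothed_char:
  "((\<lambda>j. lattice_weight r M j * Re (u * W (\<nu> + lattice_freq lam M j))) has_sum Re (u * V \<nu>)) (M \<rightarrow>\<^sub>E UNIV)"
proof -
  define p where "p k = of_real (negbin_weight a c k) * e (\<nu> * real k)" for k :: nat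
  have "((\<lambda>j. p k * (of_real (lattice_weight r M j) * e (lattice_freq lam M j * real k)))
          has_sum (p k * of_real (poisson_prod r lam M (real k)))) (M \<rightarrow>\<^sub>E UNIV)" for k
    by (intro has_sum_cmult_right has_sum_poisson_prod r M)
  then have "((\<lambda>j. \<Sum>k\<in>nats_between Y X.
                 p k * (of_real (lattice_weight r M j) * e (lattice_freq lam M j * real k)))
          has_sum (\<Sum>k\<in>nats_between Y X. p k * of_real (poisson_prod r lam M (real k)))) (M \<rightarrow>\<^sub>E UNIV)"
    by (intro has_sum_sum) simp_all
  moreover have "(\<Sum>k\<in>nats_between Y X. p k * of_real (poisson_prod r lam M (real k))) = V \<nu>"
    by (simp add: smoothed_char_def p_def mult_ac)
  moreover have "(\<Sum>k\<in>nats_between Y X.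
                   p k * (of_real (lattice_weight r M j) * e (lattice_freq lam M j * real k)))
      = of_real (lattice_weight r M j) * W (\<nu> + lattice_freq lam M j)" for j
    by (simp add: p_def trunc_char_def sum_distrib_left distrib_left distrib_right e_add mult_ac)
  ultimately have "((\<lambda>j. u * (of_real (lattice_weight r M j) * W (\<nu> + lattice_freq lam M j))) has_sum u * V \<nu>)
      (M \<rightarrow>\<^sub>E UNIV)"
    by (intro has_sum_cmult_right) simp_all
  from has_sum_Re[OF this] show ?thesis
    by (simp add: mult.left_commute[of u])
qed

lemma Re_rotate_smoothed_char_ge: "- \<eta> * K \<le> Re (exp (\<i> * of_real \<beta>) * V \<nu>)"
proof (rule has_sum_mono)
  show "((\<lambda>j. - \<eta> * lattice_weight r M j) has_sum - \<eta> * K) (M \<rightarrow>\<^sub>E UNIV)"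
    by (intro has_sum_cmult_right has_sum_lattice_weight r M)
  show "- \<eta> * lattice_weight r M j
          \<le> lattice_weight r M j * Re (exp (\<i> * of_real \<beta>) * W (\<nu> + lattice_freq lam M j))" for j
    using mult_left_mono[OF W_near_sector(1) lattice_weight_nonneg[OF r(1)]] by (simp add: mult.commute)
qed (rule has_sum_Re_smoothed_char)

lemma smoothed_mass_ge: "1 - \<eta> * K \<le> \<Lambda>"
proof -
  define j\<^sub>0 :: "'i \<Rightarrow> int" where "j\<^sub>0 = (\<lambda>i. if i \<in> M then 0 else undefined)"
  have j\<^sub>0: "j\<^sub>0 \<in> M \<rightarrow>\<^sub>E UNIV" "lattice_weight r M j\<^sub>0 = 1" "lattice_freq lam M j\<^sub>0 = 0"
    by (simp_all add: j\<^sub>0_def lattice_weight_def lattice_freq_def PiE_def extensional_def)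
  define g where
    "g j = lattice_weight r M j * Re (W (lattice_freq lam M j)) + lattice_weight r M j * \<eta>" for j
  have "(g has_sum (\<Lambda> + K * \<eta>)) (M \<rightarrow>\<^sub>E UNIV)"
    unfolding g_def using has_sum_Re_smoothed_char[of 1 0] Re_smoothed_char_zero[of r lam M a c Y X]
    by (intro has_sum_add has_sum_cmult_left has_sum_lattice_weight r M) simp_all
  moreover have "0 \<le> g j" for j
    using W_near_sector(3)[of "lattice_freq lam M j"] lattice_weight_nonneg[OF r(1), of M j]
    by (simp add: g_def flip: distrib_left)
  ultimately have "sum g {j\<^sub>0} \<le> \<Lambda> + K * \<eta>"
    using j\<^sub>0(1) by (intro finite_sum_le_has_sum) auto
  then have "g j\<^sub>0 \<le> \<Lambda> + K * \<eta>"
    by simp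
  then show ?thesis
    using j\<^sub>0(2,3) Re_trunc_char_zero[of a c Y X] by (simp add: g_def mult.commute)
qed

lemma shifted_term_ge:
  fixes j :: "'i \<Rightarrow> int"
  assumes "m \<in> M"
  defines "j' \<equiv> j(m := j m - 1)"
  shows "r * \<delta> * (lattice_weight r M j * Re (W (lattice_freq lam M j)))
           - r * \<eta> * lattice_weight r M j - \<eta> * lattice_weight r M j'
         \<le> lattice_weight r M j' * Re (exp (\<i> * of_real \<beta>) * W (lattice_freq lam M j))"
proof -
  define \<Phi> where "\<Phi> = Re (exp (\<i> * of_real \<beta>) * W (lattice_freq lam M j))"
  define \<Psi> where "\<Psi> = Re (W (lattice_freq lam M j))"
  have "0 \<le> \<Phi> + \<eta>"
    using W_near_sector(1)[of "lattice_freq lam M j"] unfolding \<Phi>_def by linarith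
  moreover have "r * lattice_weight r M j \<le> lattice_weight r M j'"
    unfolding j'_def using lattice_weight_decr_coordinate[OF assms(1) M] r by simp
  ultimately have "r * lattice_weight r M j * (\<Phi> + \<eta>) \<le> lattice_weight r M j' * (\<Phi> + \<eta>)"
    by (rule mult_right_mono[rotated])
  moreover have "r * lattice_weight r M j * (\<delta> * \<Psi> - \<eta>) \<le> r * lattice_weight r M j * (\<Phi> + \<eta>)"
  proof (rule mult_left_mono)
    show "\<delta> * \<Psi> - \<eta> \<le> \<Phi> + \<eta>"
      using W_near_sector(2)[of "lattice_freq lam M j"] unfolding \<Phi>_def \<Psi>_def by linarith
    show "0 \<le> r * lattice_weight r M j"
      using lattice_weight_nonneg[OF r(1)] r(1) by (rule mult_nonneg_nonneg[rotated])
  qed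
  ultimately show ?thesis
    unfolding \<Phi>_def[symmetric] \<Psi>_def[symmetric] by (simp add: algebra_simps)
qed

text \<open>
  Shifting the lattice point \<open>j\<close> by one in coordinate \<open>m\<close> absorbs the frequency \<open>lam m\<close> and
  costs at most a factor \<open>r\<close> in the weight.
\<close>
lemma Re_rotate_smoothed_char_shift_ge:
  assumes "m \<in> M"
  shows "r * \<delta> * \<Lambda> - 2 * \<eta> * K \<le> Re (exp (\<i> * of_real \<beta>) * V (lam m))"
proof -
  define s where "s j = j(m := j m - 1)" for j :: "'i \<Rightarrow> int"
  have bij: "bij_betw s (M \<rightarrow>\<^sub>E UNIV) (M \<rightarrow>\<^sub>E UNIV)"
    unfolding s_def by (rule bij_betw_decr_coordinate[OF assms])
  have freq: "lam m + lattice_freq lam M (s j) = lattice_freq lam M j" for j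
    unfolding s_def using lattice_freq_decr_coordinate[OF assms M] by simp
  define \<Phi> where "\<Phi> \<nu> = Re (exp (\<i> * of_real \<beta>) * W \<nu>)" for \<nu>
  have "((\<lambda>j. lattice_weight r M j * \<Phi> (lam m + lattice_freq lam M j))
          has_sum Re (exp (\<i> * of_real \<beta>) * V (lam m))) (M \<rightarrow>\<^sub>E UNIV)"
    unfolding \<Phi>_def by (rule has_sum_Re_smoothed_char)
  then have upper: "((\<lambda>j. lattice_weight r M (s j) * \<Phi> (lattice_freq lam M j))
          has_sum Re (exp (\<i> * of_real \<beta>) * V (lam m))) (M \<rightarrow>\<^sub>E UNIV)"
    using has_sum_reindex_bij_betw[OF bij, of "\<lambda>j. lattice_weight r M j * \<Phi> (lam m + lattice_freq lam M j)"]
    by (simp add: freq)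
  have lower: "((\<lambda>j. r * \<delta> * (lattice_weight r M j * Re (W (lattice_freq lam M j)))
                      - r * \<eta> * lattice_weight r M j - \<eta> * lattice_weight r M (s j))
          has_sum (r * \<delta> * \<Lambda> - r * \<eta> * K - \<eta> * K)) (M \<rightarrow>\<^sub>E UNIV)"
  proof (intro has_sum_diff has_sum_cmult_right)
    show "((\<lambda>j. lattice_weight r M j * Re (W (lattice_freq lam M j))) has_sum \<Lambda>) (M \<rightarrow>\<^sub>E UNIV)"
      using has_sum_Re_smoothed_char[of 1 0] by (simp add: Re_smoothed_char_zero)
    show "(lattice_weight r M has_sum K) (M \<rightarrow>\<^sub>E UNIV)"
      by (rule has_sum_lattice_weight[OF r M])
    then show "((\<lambda>j. lattice_weight r M (s j)) has_sum K) (M \<rightarrow>\<^sub>E UNIV)"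
      by (simp only: has_sum_reindex_bij_betw[OF bij])
  qed
  have "r * \<delta> * (lattice_weight r M j * Re (W (lattice_freq lam M j)))
          - r * \<eta> * lattice_weight r M j - \<eta> * lattice_weight r M (s j)
        \<le> lattice_weight r M (s j) * \<Phi> (lattice_freq lam M j)" for j
    unfolding s_def \<Phi>_def by (rule shifted_term_ge[OF assms])
  then have "r * \<delta> * \<Lambda> - r * \<eta> * K - \<eta> * K \<le> Re (exp (\<i> * of_real \<beta>) * V (lam m))"
    by (rule has_sum_mono[OF lower upper])
  moreover have "r * \<eta> * K \<le> \<eta> * K"
    using r eta_nonneg by (intro mult_right_mono mult_left_le_one_le) auto
  ultimately show ?thesis
    by linarith
qed

end

section \<open>Large values of \<open>F\<close>\<close>

lemma sums_Fser:
  assumes "\<And>n. 0 \<le> f (Suc n)" "summable (\<lambda>n. f (Suc n))"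
  shows "(\<lambda>n. of_real (f (Suc n)) * e (lam (Suc n) * x)) sums Fser f lam x"
proof -
  have "summable (\<lambda>n. norm (of_real (f (Suc n)) * e (lam (Suc n) * x)))"
    using assms by (simp add: norm_mult)
  then show ?thesis
    unfolding Fser_def by (rule summable_sums[OF summable_norm_cancel])
qed

lemma Re_Fser_zero:
  assumes "summable (\<lambda>n. f (Suc n))"
  shows "Re (Fser f lam 0) = (\<Sum>n. f (Suc n))"
proof -
  have "of_real (\<Sum>n. f (Suc n)) = Fser f lam 0"
    using suminf_of_real[OF assms, where 'a = complex] by (simp add: Fser_def)
  then show ?thesis
    by (metis Re_complex_of_real)
qed

lemma Re_Fser_ge:
  assumes "\<And>n. 0 \<le> f (Suc n)" "summable (\<lambda>n. f (Suc n))" "norm u = 1"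
  shows "- Re (Fser f lam 0) \<le> Re (u * Fser f lam x)"
proof -
  have "norm (Fser f lam x) \<le> (\<Sum>n. norm (of_real (f (Suc n)) * e (lam (Suc n) * x)))"
    using assms(1,2) unfolding Fser_def by (intro summable_norm) (simp add: norm_mult)
  also have "\<dots> = Re (Fser f lam 0)"
    using assms(1,2) by (simp add: norm_mult Re_Fser_zero)
  finally show ?thesis
    using abs_Re_le_cmod[of "u * Fser f lam x"] assms(3) by (simp add: norm_mult)
qed

lemma Re_mult_of_real_mult: "Re (u * (of_real x * z)) = x * Re (u * z)"
  by (simp add: algebra_simps)

lemma Re_mult_smoothed_char:
  "Re (u * smoothed_char r lam M a c Y X \<nu>) =
     (\<Sum>k\<in>nats_between Y X. negbin_weight a c k * poisson_prod r lam M (real k) * Re (u * e (\<nu> * real k)))"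
  by (simp only: smoothed_char_def sum_distrib_left Re_sum Re_mult_of_real_mult)

lemma sums_Re_smoothed_char_Fser:
  assumes "\<And>n. 0 \<le> f (Suc n)" "summable (\<lambda>n. f (Suc n))"
  shows "(\<lambda>n. f (Suc n) * Re (u * smoothed_char r lam M a c Y X (lam (Suc n)))) sums
           (\<Sum>k\<in>nats_between Y X.
              negbin_weight a c k * poisson_prod r lam M (real k) * Re (u * Fser f lam (real k)))"
proof -
  define p where "p k = negbin_weight a c k * poisson_prod r lam M (real k)" for k
  have "(\<lambda>n. p k * Re (u * (of_real (f (Suc n)) * e (lam (Suc n) * real k))))
          sums (p k * Re (u * Fser f lam (real k)))"
    for k
    by (intro sums_mult sums_Re sums_Fser assms)
  then have "(\<lambda>n. \<Sum>k\<in>nats_between Y X. p k * Re (u * (of_real (f (Suc n)) * e (lam (Suc n) * real k))))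
      sums (\<Sum>k\<in>nats_between Y X. p k * Re (u * Fser f lam (real k)))"
    by (rule sums_sum)
  moreover have "(\<Sum>k\<in>nats_between Y X. p k * Re (u * (of_real (f (Suc n)) * e (lam (Suc n) * real k))))
      = f (Suc n) * Re (u * smoothed_char r lam M a c Y X (lam (Suc n)))" for n
    by (simp only: Re_mult_smoothed_char Re_mult_of_real_mult p_def sum_distrib_left mult_ac)
  ultimately show ?thesis
    by (simp add: p_def)
qed

lemma sums_restrict_Suc:
  fixes f :: "nat \<Rightarrow> 'a::real_normed_vector"
  assumes "finite M" "0 \<notin> M"
  shows "(\<lambda>n. if Suc n \<in> M then f (Suc n) else 0) sums (\<Sum>m\<in>M. f m)"
  using assms sums_If_finite_set[OF assms(1), of f] sums_Suc_iff[of "\<lambda>m. if m \<in> M then f m else 0"]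
  by simp

lemma weighted_Fser_ge:
  fixes f lam :: "nat \<Rightarrow> real" and M :: "nat set"
  assumes "sector_smoothing \<beta> \<delta> r a c M" "M \<subseteq> {1..}"
    and "\<And>n. 0 \<le> f (Suc n)" "summable (\<lambda>n. f (Suc n))"
  shows "r * \<delta> * smoothed_mass r lam M a c Y X * (\<Sum>m\<in>M. f m)
           - 2 * trunc_defect a c Y X * ((1 + r) / (1 - r)) ^ card M * Re (Fser f lam 0)
         \<le> (\<Sum>k\<in>nats_between Y X.
              negbin_weight a c k * poisson_prod r lam M (real k)
                * Re (exp (\<i> * of_real \<beta>) * Fser f lam (real k)))"
proof -
  interpret sector_smoothing \<beta> \<delta> r a c Y X lam M
    by (fact assms(1))
  define D where "D n = Re (exp (\<i> * of_real \<beta>) * V (lam (Suc n)))" for n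
  define f\<^sub>M where "f\<^sub>M n = (if Suc n \<in> M then f (Suc n) else 0)" for n
  have "f\<^sub>M sums (\<Sum>m\<in>M. f m)"
    unfolding f\<^sub>M_def using M assms(2) by (intro sums_restrict_Suc) auto
  then have lower: "(\<lambda>n. f\<^sub>M n * (r * \<delta> * \<Lambda>) - f (Suc n) * (2 * \<eta> * K))
      sums ((\<Sum>m\<in>M. f m) * (r * \<delta> * \<Lambda>) - Re (Fser f lam 0) * (2 * \<eta> * K))"
    using assms(4) by (intro sums_diff sums_mult2) (simp_all add: Re_Fser_zero summable_sums)
  have upper: "(\<lambda>n. f (Suc n) * D n) sums
      (\<Sum>k\<in>nats_between Y X. negbin_weight a c k * poisson_prod r lam M (real k)
          * Re (exp (\<i> * of_real \<beta>) * Fser f lam (real k)))"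
    unfolding D_def by (rule sums_Re_smoothed_char_Fser[OF assms(3,4)])
  have "f\<^sub>M n * (r * \<delta> * \<Lambda>) - f (Suc n) * (2 * \<eta> * K) \<le> f (Suc n) * D n" for n
  proof (cases "Suc n \<in> M")
    case True
    then show ?thesis
      using mult_left_mono[OF Re_rotate_smoothed_char_shift_ge[OF True] assms(3)]
      by (simp add: f\<^sub>M_def D_def algebra_simps)
  next
    case False
    have "0 \<le> \<eta> * K"
      using eta_nonneg r by simp
    then have "- (2 * \<eta> * K) \<le> D n"
      using Re_rotate_smoothed_char_ge[of "lam (Suc n)"] by (simp add: D_def)
    then show ?thesis
      using mult_left_mono[OF _ assms(3), of "- (2 * \<eta> * K)" "D n"] False by (simp add: f\<^sub>M_def)
  qed
  from sums_le[OF this lower upper] show ?thesis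
    by (simp add: mult_ac)
qed

lemma exists_ge_weighted_average:
  fixes p g :: "'a \<Rightarrow> real"
  assumes "finite S" "\<And>k. k \<in> S \<Longrightarrow> 0 \<le> p k" "0 < (\<Sum>k\<in>S. p k)" "B \<le> (\<Sum>k\<in>S. p k * g k)"
  shows "\<exists>k\<in>S. B / (\<Sum>k\<in>S. p k) \<le> g k"
proof -
  have "S \<noteq> {}"
    using assms(3) by auto
  then have "Max (g ` S) \<in> g ` S"
    using assms(1) by simp
  then obtain k where k: "k \<in> S" "g k = Max (g ` S)"
    by (metis imageE)
  have "(\<Sum>k\<in>S. p k * g k) \<le> (\<Sum>k'\<in>S. p k' * g k)"
    using assms(1,2) k by (intro sum_mono mult_left_mono) auto
  then have "B \<le> (\<Sum>k\<in>S. p k) * g k"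
    using assms(4) by (simp add: sum_distrib_right)
  then show ?thesis
    using k(1) assms(3) by (auto simp: divide_le_eq mult.commute)
qed

lemma exists_Fser_value_ge_of_mass:
  fixes f lam :: "nat \<Rightarrow> real" and M :: "nat set"
  assumes setting: "sector_smoothing \<beta> \<delta> r a c M" and "M \<subseteq> {1..}"
    and "\<And>n. 0 \<le> f (Suc n)" "summable (\<lambda>n. f (Suc n))"
    and "1 / 2 < smoothed_mass r lam M a c Y X"
  shows "\<exists>k\<in>nats_between Y X. \<delta> * r * (\<Sum>m\<in>M. f m)
           - 4 * trunc_defect a c Y X * ((1 + r) / (1 - r)) ^ card M * Re (Fser f lam 0)
         \<le> Re (exp (\<i> * of_real \<beta>) * Fser f lam (real k))"
proof -
  interpret sector_smoothing \<beta> \<delta> r a c Y X lam M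
    by (fact setting)
  define A where "A = Re (Fser f lam 0)"
  define S\<^sub>M where "S\<^sub>M = (\<Sum>m\<in>M. f m)"
  have "r * \<delta> * \<Lambda> * S\<^sub>M - 2 * \<eta> * K * A
        \<le> (\<Sum>k\<in>nats_between Y X. negbin_weight a c k * poisson_prod r lam M (real k)
              * Re (exp (\<i> * of_real \<beta>) * Fser f lam (real k)))"
    unfolding S\<^sub>M_def A_def by (rule weighted_Fser_ge[OF setting assms(2-4)])
  then have "\<exists>k\<in>nats_between Y X.
      (r * \<delta> * \<Lambda> * S\<^sub>M - 2 * \<eta> * K * A) / \<Lambda> \<le> Re (exp (\<i> * of_real \<beta>) * Fser f lam (real k))"
    unfolding smoothed_mass_def
  proof (rule exists_ge_weighted_average[rotated 3])
    show "0 \<le> negbin_weight a c k * poisson_prod r lam M (real k)" for k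
      using negbin_weight_nonneg[OF a(1) c(2)] poisson_prod_pos[OF r]
      by (meson less_imp_le mult_nonneg_nonneg)
    show "0 < (\<Sum>k\<in>nats_between Y X. negbin_weight a c k * poisson_prod r lam M (real k))"
      using assms(5) unfolding smoothed_mass_def by linarith
  qed simp
  moreover have "\<delta> * r * S\<^sub>M - 4 * \<eta> * K * A \<le> (r * \<delta> * \<Lambda> * S\<^sub>M - 2 * \<eta> * K * A) / \<Lambda>"
  proof -
    define t where "t = \<eta> * K * A"
    have "0 \<le> A"
      using assms(3,4) by (simp add: A_def Re_Fser_zero suminf_nonneg)
    then have "0 \<le> t"
      using eta_nonneg r by (simp add: t_def)
    then have "t * 1 \<le> t * (2 * \<Lambda>)"
      using assms(5) by (intro mult_left_mono) auto
    then have "2 * t / \<Lambda> \<le> 4 * t"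
      using assms(5) by (simp add: divide_le_eq algebra_simps)
    moreover have "(r * \<delta> * \<Lambda> * S\<^sub>M - 2 * t) / \<Lambda> = \<delta> * r * S\<^sub>M - 2 * t / \<Lambda>"
      using assms(5) by (simp add: field_simps)
    ultimately show ?thesis
      by (simp add: t_def mult.assoc)
  qed
  ultimately show ?thesis
    unfolding A_def S\<^sub>M_def by (meson order_trans)
qed

lemma sum_le_Re_Fser_zero:
  assumes "finite M" "M \<subseteq> {1..}" "\<And>n. 0 \<le> f (Suc n)" "summable (\<lambda>n. f (Suc n))"
  shows "0 \<le> (\<Sum>m\<in>M. f m)" and "(\<Sum>m\<in>M. f m) \<le> Re (Fser f lam 0)"
proof -
  have "0 \<notin> M"
    using assms(2) by auto
  then show "0 \<le> (\<Sum>m\<in>M. f m)"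
    using assms(3) by (intro sum_nonneg) (metis not0_implies_Suc)
  have "(\<lambda>n. if Suc n \<in> M then f (Suc n) else 0) sums (\<Sum>m\<in>M. f m)"
    using assms(1) \<open>0 \<notin> M\<close> by (rule sums_restrict_Suc)
  moreover have "(\<lambda>n. f (Suc n)) sums Re (Fser f lam 0)"
    unfolding Re_Fser_zero[OF assms(4)] using assms(4) by (rule summable_sums)
  ultimately show "(\<Sum>m\<in>M. f m) \<le> Re (Fser f lam 0)"
    by (rule sums_le[rotated]) (simp add: assms(3))
qed

text \<open>
  Either the truncation loss \<open>\<eta>\<close> is so large that the bound \<open>- F(0)\<close>, valid everywhere,
  suffices, or the total weight exceeds \<open>1/2\<close> and the weighted average does the job.
\<close>
lemma exists_Fser_value_ge:
  fixes f lam :: "nat \<Rightarrow> real" and M :: "nat set"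
  assumes setting: "sector_smoothing \<beta> \<delta> r a c M" and "M \<subseteq> {1..}"
    and "\<And>n. 0 \<le> f (Suc n)" "summable (\<lambda>n. f (Suc n))" "Y \<le> X"
  shows "\<exists>x\<in>{Y..X}. \<delta> * r * (\<Sum>m\<in>M. f m)
           - 4 * trunc_defect a c Y X * ((1 + r) / (1 - r)) ^ card M * Re (Fser f lam 0)
         \<le> Re (exp (\<i> * of_real \<beta>) * Fser f lam x)"
proof (cases "1 / 2 \<le> trunc_defect a c Y X * ((1 + r) / (1 - r)) ^ card M")
  case True
  interpret sector_smoothing \<beta> \<delta> r a c Y X lam M
    by (fact setting)
  define A where "A = Re (Fser f lam 0)"
  have S\<^sub>M: "0 \<le> (\<Sum>m\<in>M. f m)" "(\<Sum>m\<in>M. f m) \<le> A"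
    unfolding A_def using sum_le_Re_Fser_zero[OF M assms(2-4)] by auto
  have "\<delta> * r \<le> 1"
    using delta_le_one \<delta> r by (intro mult_le_one) auto
  then have "\<delta> * r * (\<Sum>m\<in>M. f m) \<le> A"
    using S\<^sub>M mult_right_mono[of "\<delta> * r" 1 "\<Sum>m\<in>M. f m"] by linarith
  moreover have "2 * A \<le> 4 * \<eta> * K * A"
    using True S\<^sub>M mult_right_mono[of 1 "2 * \<eta> * K" A] by (simp add: algebra_simps)
  moreover have "- A \<le> Re (exp (\<i> * of_real \<beta>) * Fser f lam Y)"
    unfolding A_def by (rule Re_Fser_ge[OF assms(3,4) norm_exp_i_times])
  ultimately have "\<delta> * r * (\<Sum>m\<in>M. f m) - 4 * \<eta> * K * A \<le> Re (exp (\<i> * of_real \<beta>) * Fser f lam Y)"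
    by linarith
  then show ?thesis
    using assms(5) unfolding A_def by (intro bexI[of _ Y]) auto
next
  case False
  then have "1 / 2 < smoothed_mass r lam M a c Y X"
    using sector_smoothing.smoothed_mass_ge[OF setting, of Y X lam] by linarith
  then show ?thesis
    using exists_Fser_value_ge_of_mass[OF setting assms(2-4)] by (force simp: nats_between_def)
qed

lemma exists_large_Fser_value:
  fixes f lam :: "nat \<Rightarrow> real" and M :: "nat set"
  assumes "0 < r" "r < 1" "0 \<le> \<delta>" "0 < a" "a < 1" "\<bar>sin \<beta>\<bar> * tan (a * pi / 2) \<le> cos \<beta> - \<delta>"
    and "finite M" "M \<subseteq> {1..}" "\<And>n. 0 \<le> f (Suc n)" "summable (\<lambda>n. f (Suc n))" "3 < Y" "Y < X"
  shows "\<exists>x\<in>{Y..X}. \<delta> * r * (\<Sum>m\<in>M. f m)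
           - 40 * Re (Fser f lam 0) * ((1 + r) / (1 - r)) ^ card M * (Y * ln X / X) powr a
         \<le> Re (exp (\<i> * of_real \<beta>) * Fser f lam x)"
proof -
  define c where "c = ln X / X"
  have "0 < c" "c < 1"
    using assms(11,12) ln_ge_one[of X] by (auto simp: c_def)
  then have setting: "sector_smoothing \<beta> \<delta> r a c M"
    using assms by unfold_locales auto
  interpret sector_smoothing \<beta> \<delta> r a c Y X lam M
    by (fact setting)
  define A where "A = Re (Fser f lam 0)"
  define \<epsilon> where "\<epsilon> = (Y * ln X / X) powr a"
  have "\<eta> \<le> 10 * \<epsilon>"
    unfolding c_def \<epsilon>_def using assms by (intro trunc_defect_le_log) auto
  moreover have "0 \<le> K * A"
    using sum_le_Re_Fser_zero(2)[OF assms(7-10), of lam] sum_le_Re_Fser_zero(1)[OF assms(7-10)] r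
    by (simp add: A_def)
  ultimately have "4 * \<eta> * (K * A) \<le> 4 * (10 * \<epsilon>) * (K * A)"
    by (intro mult_right_mono) auto
  then have \<eta>_le: "4 * \<eta> * K * A \<le> 40 * A * K * \<epsilon>"
    by (simp add: mult_ac)
  obtain x where x: "x \<in> {Y..X}"
    "\<delta> * r * (\<Sum>m\<in>M. f m) - 4 * \<eta> * K * A \<le> Re (exp (\<i> * of_real \<beta>) * Fser f lam x)"
    unfolding A_def using exists_Fser_value_ge[OF setting assms(8-10) less_imp_le[OF assms(12)]] by blast
  then have "\<delta> * r * (\<Sum>m\<in>M. f m) - 40 * A * K * \<epsilon> \<le> Re (exp (\<i> * of_real \<beta>) * Fser f lam x)"
    using \<eta>_le by linarith
  with x(1) show ?thesis
    unfolding A_def \<epsilon>_def by blast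
qed

theorem theorem1p2:
  fixes \<beta> r \<delta> :: real
  assumes "- (pi / 2) < \<beta>" and "\<beta> < pi / 2" and "\<beta> \<noteq> 0"
    and "0 < r" and "r < 1"
    and "0 < \<delta>" and "\<delta> < cos \<beta>"
  shows "\<exists>C>0. \<forall>(f :: nat \<Rightarrow> real) (lam :: nat \<Rightarrow> real) (Ms :: nat set) (X :: real) (Y :: real).
           (\<forall>n\<ge>1. 0 \<le> f n) \<and> summable (\<lambda>k. f (Suc k)) \<and> (\<forall>n\<ge>1. 0 < lam n)
           \<and> finite Ms \<and> Ms \<subseteq> {1..} \<and> 3 < Y \<and> Y < X \<longrightarrow>
           (\<exists>x\<in>{Y..X}. Re (exp (\<i> * of_real \<beta>) * Fser f lam x)
              \<ge> \<delta> * r * (\<Sum>m\<in>Ms. f m)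
                 - C * Re (Fser f lam 0) * ((1 + r) / (1 - r)) ^ card Ms
                     * (Y * ln X / X) powr ((2 / pi) * arctan ((cos \<beta> - \<delta>) / \<bar>sin \<beta>\<bar>)))"
proof -
  define q where "q = (cos \<beta> - \<delta>) / \<bar>sin \<beta>\<bar>"
  define a where "a = (2 / pi) * arctan q"
  have "sin \<beta> \<noteq> 0"
    using assms(1-3) sin_eq_0_pi[of \<beta>] by auto
  then have "0 < q"
    using assms(7) by (simp add: q_def)
  then have "0 < a" "a < 1"
    using arctan_ubound[of q] by (simp_all add: a_def field_simps)
  moreover have "\<bar>sin \<beta>\<bar> * tan (a * pi / 2) = cos \<beta> - \<delta>"
    using \<open>sin \<beta> \<noteq> 0\<close> by (simp add: a_def q_def tan_arctan)
  ultimately have main: "\<exists>x\<in>{Y..X}. \<delta> * r * (\<Sum>m\<in>Ms. f m)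
           - 40 * Re (Fser f lam 0) * ((1 + r) / (1 - r)) ^ card Ms * (Y * ln X / X) powr a
         \<le> Re (exp (\<i> * of_real \<beta>) * Fser f lam x)"
    if "\<forall>n\<ge>1. 0 \<le> f n" "summable (\<lambda>k. f (Suc k))" "finite Ms" "Ms \<subseteq> {1..}" "3 < Y" "Y < X"
    for f lam :: "nat \<Rightarrow> real" and Ms X Y
    using that assms(4-6) by (intro exists_large_Fser_value) auto
  show ?thesis
    by (intro exI[of _ 40] conjI allI impI) (use main[unfolded a_def q_def] in auto)
qed

end
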